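(* There is a universal constant $c>0$ such that for all $q\in(0,1/2)$, all $\gamma\in(0,1]$ and $L=\lfloor 1/q^\gamma\rfloor$, with $B=\{\eta\in\Omega_\Lambda:\eta_L=1\}$, $$\frac{c\,q}{C_{\mathbb 10,B}}\le T_{\rm hit}(L)\le\frac{q}{C_{\mathbb 10,B}}.$$
   Context: Fix $q\in(0,1/2)$, $p=1-q$, $\Lambda=\{1,\dots,L\}$, $\Omega_\Lambda=\{0,1\}^\Lambda$, $\pi$ the product measure with $\pi(\sigma_x=1)=p$. The East process has transition rates $K(\sigma,\sigma^x)=c_x(\sigma)[p(1-\sigma_x)+q\sigma_x]$ ($\sigma^x$ = $\sigma$ with spin at $x$ flipped), $c_1\equiv1$, $c_x(\sigma)=1-\sigma_{x-1}$ for $x\ge2$. For disjoint $A,B\subset\Omega_\Lambda$, the capacity is $C_{A,B}=\sum_{a\in A}\pi(a)\mathcal R(a)\mathbb P_a(\tau_A^+>\tau_B)$, where $\mathcal R(a)=\sum_{\sigma\ne a}K(a,\sigma)$, $\tau_B$ is the hitting time of $B$ and $\tau_A^+$ the first return time to $A$ (first time in $A$ after leaving the initial state); $C_{a,B}$ denotes $C_{\{a\},B}$. $\mathbb 10$ has $\sigma_x=1$ for $x<L$, $\sigma_L=0$, and $T_{\rm hit}(L)=\mathbb E_{\mathbb 10}[\tau_{\{\eta_L=1\}}]$. *)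

theory Defs
  imports Complex_Main
begin

text \<open>East process on \<Lambda> = {1..L}. Configurations are functions nat \<Rightarrow> bool
  (True = spin 1) that are False outside {1..L}. The parameter q is the
  density of zeros, p = 1 - q.\<close>

type_synonym config = "nat \<Rightarrow> bool"

definition Omega :: "nat \<Rightarrow> config set" where
  "Omega L = {\<sigma>. \<forall>x. (x < 1 \<or> L < x) \<longrightarrow> \<not> \<sigma> x}"

definition flip :: "config \<Rightarrow> nat \<Rightarrow> config" where
  "flip \<sigma> x = \<sigma>(x := \<not> \<sigma> x)"

definition constr :: "nat \<Rightarrow> config \<Rightarrow> real" where
  "constr x \<sigma> = (if x = 1 then 1 else if \<sigma> (x - 1) then 0 else 1)"

definition K :: "nat \<Rightarrow> real \<Rightarrow> config \<Rightarrow> config \<Rightarrow> real" where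
  "K L q \<sigma> \<eta> = (\<Sum>x\<in>{1..L}. if \<eta> = flip \<sigma> x
       then constr x \<sigma> * (if \<sigma> x then q else 1 - q) else 0)"

definition R :: "nat \<Rightarrow> real \<Rightarrow> config \<Rightarrow> real" where
  "R L q \<sigma> = (\<Sum>\<eta>\<in>Omega L - {\<sigma>}. K L q \<sigma> \<eta>)"

definition pi_east :: "nat \<Rightarrow> real \<Rightarrow> config \<Rightarrow> real" where
  "pi_east L q \<sigma> = (\<Prod>x\<in>{1..L}. if \<sigma> x then 1 - q else q)"

definition paths :: "nat \<Rightarrow> nat \<Rightarrow> config list set" where
  "paths L n = {xs. length xs = n \<and> set xs \<subseteq> Omega L}"

definition path_prob :: "nat \<Rightarrow> real \<Rightarrow> config list \<Rightarrow> real" where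
  "path_prob L q xs = (\<Prod>i<length xs - 1. K L q (xs ! i) (xs ! Suc i) / R L q (xs ! i))"

text \<open>P_a(\<tau>_A^+ > \<tau>_B) for a \<in> A, A, B disjoint: the jump chain started at a
  reaches B at step n+1 without visiting A \<union> B at steps 1..n.\<close>
definition escape_prob :: "nat \<Rightarrow> real \<Rightarrow> config \<Rightarrow> config set \<Rightarrow> config set \<Rightarrow> real" where
  "escape_prob L q a A B = (\<Sum>n. \<Sum>ys\<in>paths L (Suc n).
      (let xs = a # ys in
        if xs ! Suc n \<in> B \<and> (\<forall>i\<in>{1..n}. xs ! i \<notin> A \<union> B) then path_prob L q xs else 0))"

definition capacity :: "nat \<Rightarrow> real \<Rightarrow> config set \<Rightarrow> config set \<Rightarrow> real" where
  "capacity L q A B = (\<Sum>a\<in>A. pi_east L q a * R L q a * escape_prob L q a A B)"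

text \<open>E_a[\<tau>_B] for the continuous-time chain: sum over the jump-chain paths
  first entering B at step n+1 of the path probability times the expected
  total holding time 1/R(x_0)+...+1/R(x_n) spent before entering B.
  (It is 0 if a \<in> B.)\<close>
definition exp_hit :: "nat \<Rightarrow> real \<Rightarrow> config \<Rightarrow> config set \<Rightarrow> real" where
  "exp_hit L q a B = (\<Sum>n. \<Sum>ys\<in>paths L (Suc n).
      (let xs = a # ys in
        if xs ! Suc n \<in> B \<and> (\<forall>i\<le>n. xs ! i \<notin> B)
        then path_prob L q xs * (\<Sum>i\<le>n. 1 / R L q (xs ! i)) else 0))"

definition one_zero :: "nat \<Rightarrow> config" where
  "one_zero L = (\<lambda>x. 1 \<le> x \<and> x < L)"

definition B_set :: "nat \<Rightarrow> config set" where
  "B_set L = {\<eta> \<in> Omega L. \<eta> L}"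

definition T_hit :: "nat \<Rightarrow> real \<Rightarrow> real" where
  "T_hit L q = exp_hit L q (one_zero L) (B_set L)"

end

theory Submission
  imports Defs
begin

text \<open>Write \<open>w(\<sigma>) = E\<^sub>\<sigma>[\<tau>\<^sub>B]\<close> and \<open>h(\<sigma>) = P\<^sub>\<sigma>(\<tau>\<^sub>a < \<tau>\<^sub>B)\<close> for \<open>a = 10\<close>. Off \<open>B\<close>, the generator
  maps \<open>w\<close> to \<open>-1\<close> and \<open>h\<close> to \<open>-C\<^sub>a\<^sub>,\<^sub>B/\<pi>(a)\<close> at \<open>a\<close> and to \<open>0\<close> elsewhere, so reversibility of the
  East process gives \<open>w(a) C\<^sub>a\<^sub>,\<^sub>B = \<Sum>\<^sub>\<sigma>\<^sub>\<notin>\<^sub>B \<pi>(\<sigma>) h(\<sigma>)\<close>. As \<open>0 \<le> h \<le> 1\<close> and \<open>h(a) = 1\<close>, the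
  right-hand side lies between \<open>\<pi>(a) = p\<^sup>L\<^sup>-\<^sup>1 q\<close> and \<open>\<pi>(\<eta>\<^sub>L = 0) = q\<close>, and \<open>p\<^sup>L\<^sup>-\<^sup>1 \<ge> e\<^sup>-\<^sup>2\<close> since
  \<open>Lq \<le> 1\<close>. That \<open>w\<close> is finite and satisfies its first-step equation rests on the jump chain
  entering \<open>B\<close> within \<open>L\<close> steps with probability at least \<open>(q/L)\<^sup>L\<close> from every configuration.\<close>

lemma Omega_0: "Omega 0 = {\<lambda>_. False}"
  unfolding Omega_def by (auto simp: fun_eq_iff)

lemma Omega_outside: "\<sigma> \<in> Omega L \<Longrightarrow> (x < 1 \<or> L < x) \<Longrightarrow> \<not> \<sigma> x"
  unfolding Omega_def by blast

lemma Omega_Suc: "Omega (Suc L) = Omega L \<union> (\<lambda>\<sigma>. \<sigma>(Suc L := True)) ` Omega L"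
proof
  show "Omega (Suc L) \<subseteq> Omega L \<union> (\<lambda>\<sigma>. \<sigma>(Suc L := True)) ` Omega L"
  proof
    fix \<sigma> assume \<sigma>: "\<sigma> \<in> Omega (Suc L)"
    show "\<sigma> \<in> Omega L \<union> (\<lambda>\<sigma>. \<sigma>(Suc L := True)) ` Omega L"
    proof (cases "\<sigma> (Suc L)")
      case True
      have "\<sigma> = (\<sigma>(Suc L := False))(Suc L := True)" using True by (auto simp: fun_eq_iff)
      moreover have "\<sigma>(Suc L := False) \<in> Omega L"
        using \<sigma> unfolding Omega_def by (auto simp: Suc_lessI)
      ultimately show ?thesis by blast
    next
      case False
      then have "\<sigma> \<in> Omega L" using \<sigma> unfolding Omega_def using Suc_lessI by blast
      then show ?thesis by blast
    qed
  qed
qed (auto simp: Omega_def)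

lemma Omega_Suc_disjoint: "Omega L \<inter> (\<lambda>\<sigma>. \<sigma>(Suc L := True)) ` Omega L = {}"
  unfolding Omega_def by auto

lemma inj_on_set_Suc: "inj_on (\<lambda>\<sigma>. \<sigma>(Suc L := True)) (Omega L)"
proof (rule inj_onI)
  fix \<sigma> \<tau> assume \<sigma>: "\<sigma> \<in> Omega L" and \<tau>: "\<tau> \<in> Omega L"
    and eq: "\<sigma>(Suc L := True) = \<tau>(Suc L := True)"
  show "\<sigma> = \<tau>"
  proof
    fix x show "\<sigma> x = \<tau> x"
      using fun_cong[OF eq, of x] Omega_outside[OF \<sigma>, of x] Omega_outside[OF \<tau>, of x]
      by (cases "x = Suc L") auto
  qed
qed

lemma finite_Omega: "finite (Omega L)"
  by (induction L) (auto simp: Omega_0 Omega_Suc)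

lemma sum_Omega_Suc:
  "(\<Sum>\<sigma>\<in>Omega (Suc L). f \<sigma>) = (\<Sum>\<sigma>\<in>Omega L. f \<sigma>) + (\<Sum>\<sigma>\<in>Omega L. f (\<sigma>(Suc L := True)))"
  unfolding Omega_Suc
  by (subst sum.union_disjoint) (auto simp: finite_Omega Omega_Suc_disjoint sum.reindex[OF inj_on_set_Suc])

lemma pi_east_nonneg: "0 \<le> q \<Longrightarrow> q \<le> 1 \<Longrightarrow> 0 \<le> pi_east L q \<sigma>"
  unfolding pi_east_def by (intro prod_nonneg) auto

lemma pi_east_Suc:
  "pi_east (Suc L) q \<sigma> = pi_east L q \<sigma> * (if \<sigma> (Suc L) then 1 - q else q)"
  unfolding pi_east_def by (simp add: atLeastAtMostSuc_conv mult.commute)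

lemma pi_east_set_Suc: "pi_east L q (\<sigma>(Suc L := b)) = pi_east L q \<sigma>"
  unfolding pi_east_def by (intro prod.cong) auto

lemma sum_pi_east: "(\<Sum>\<sigma>\<in>Omega L. pi_east L q \<sigma>) = 1"
proof (induction L)
  case 0 then show ?case by (simp add: Omega_0 pi_east_def)
next
  case (Suc L)
  have "(\<Sum>\<sigma>\<in>Omega (Suc L). pi_east (Suc L) q \<sigma>)
      = (\<Sum>\<sigma>\<in>Omega L. pi_east L q \<sigma> * q) + (\<Sum>\<sigma>\<in>Omega L. pi_east L q \<sigma> * (1 - q))"
    by (simp add: sum_Omega_Suc pi_east_Suc pi_east_set_Suc Omega_outside cong: sum.cong)
  also have "\<dots> = (\<Sum>\<sigma>\<in>Omega L. pi_east L q \<sigma>)"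
    by (simp add: sum.distrib[symmetric] algebra_simps)
  finally show ?case using Suc by simp
qed

lemma sum_pi_east_last_zero: "(\<Sum>\<sigma>\<in>Omega L. if \<sigma> L then 0 else pi_east L q \<sigma>) = q" if "0 < L"
proof -
  obtain L' where L': "L = Suc L'" using \<open>0 < L\<close> by (cases L) auto
  have "(\<Sum>\<sigma>\<in>Omega (Suc L'). if \<sigma> (Suc L') then 0 else pi_east (Suc L') q \<sigma>)
      = (\<Sum>\<sigma>\<in>Omega L'. pi_east L' q \<sigma> * q)"
    by (simp add: sum_Omega_Suc pi_east_Suc Omega_outside cong: sum.cong)
  then show ?thesis unfolding L' by (simp add: sum_distrib_right[symmetric] sum_pi_east)
qed

lemma pi_east_one_zero: "pi_east L q (one_zero L) = (1 - q) ^ (L - 1) * q" if "0 < L"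
proof -
  obtain L' where L': "L = Suc L'" using \<open>0 < L\<close> by (cases L) auto
  have "pi_east L' q (one_zero (Suc L')) = (\<Prod>j\<in>{1..L'}. 1 - q)"
    unfolding pi_east_def by (intro prod.cong) (auto simp: one_zero_def)
  then show ?thesis by (simp add: L' pi_east_Suc one_zero_def)
qed

lemma one_zero_in_Omega: "one_zero L \<in> Omega L"
  unfolding Omega_def one_zero_def by auto

lemma one_zero_notin_B_set: "one_zero L \<notin> B_set L"
  unfolding B_set_def one_zero_def by auto

lemma in_B_set_iff: "\<sigma> \<in> Omega L \<Longrightarrow> \<sigma> \<in> B_set L \<longleftrightarrow> \<sigma> L"
  unfolding B_set_def by simp

section \<open>Rates and reversibility\<close>

lemma paths_0: "paths L 0 = {[]}"
  unfolding paths_def by auto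

lemma sum_paths_Suc:
  "(\<Sum>ys\<in>paths L (Suc n). F ys) = (\<Sum>z\<in>Omega L. \<Sum>ys\<in>paths L n. F (z # ys))"
proof -
  have paths_Suc: "paths L (Suc n) = (\<lambda>(z, ys). z # ys) ` (Omega L \<times> paths L n)"
    unfolding paths_def by (auto simp: length_Suc_conv image_iff)
  have "inj_on (\<lambda>(z, ys). z # ys) (Omega L \<times> paths L n)"
    by (auto simp: inj_on_def)
  then have "(\<Sum>ys\<in>paths L (Suc n). F ys) = (\<Sum>(z, ys)\<in>Omega L \<times> paths L n. F (z # ys))"
    unfolding paths_Suc by (subst sum.reindex) (auto simp: case_prod_beta comp_def)
  then show ?thesis by (simp add: sum.cartesian_product)
qed

lemma path_prob_singleton: "path_prob L q [\<sigma>] = 1"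
  unfolding path_prob_def by simp

lemma path_prob_Cons_Cons:
  "path_prob L q (\<sigma> # \<tau> # ys) = K L q \<sigma> \<tau> / R L q \<sigma> * path_prob L q (\<tau> # ys)"
proof -
  have len: "length (\<sigma> # \<tau> # ys) - 1 = Suc (length (\<tau> # ys) - 1)" by simp
  show ?thesis unfolding path_prob_def len prod.lessThan_Suc_shift by simp
qed

definition flip_rate :: "real \<Rightarrow> nat \<Rightarrow> config \<Rightarrow> real" where
  "flip_rate q x \<sigma> = constr x \<sigma> * (if \<sigma> x then q else 1 - q)"

lemma flip_rate_nonneg: "q \<le> 1 \<Longrightarrow> 0 \<le> q \<Longrightarrow> 0 \<le> flip_rate q x \<sigma>"
  unfolding flip_rate_def constr_def by auto

lemma flip_rate_le_1: "q \<le> 1 \<Longrightarrow> 0 \<le> q \<Longrightarrow> flip_rate q x \<sigma> \<le> 1"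
  unfolding flip_rate_def constr_def by auto

lemma flip_in_Omega: "\<sigma> \<in> Omega L \<Longrightarrow> x \<in> {1..L} \<Longrightarrow> flip \<sigma> x \<in> Omega L"
  unfolding Omega_def flip_def by auto

lemma flip_flip [simp]: "flip (flip \<sigma> x) x = \<sigma>"
  unfolding flip_def by auto

lemma flip_neq: "flip \<sigma> x \<noteq> \<sigma>"
  unfolding flip_def by (metis fun_upd_same)

lemma flip_eq_flip_iff: "flip \<sigma> x = flip \<sigma> y \<longleftrightarrow> x = y"
  unfolding flip_def by (metis fun_upd_apply)

lemma constr_flip: "1 \<le> x \<Longrightarrow> constr x (flip \<sigma> x) = constr x \<sigma>"
  unfolding constr_def flip_def by auto

lemma K_flip: "x \<in> {1..L} \<Longrightarrow> K L q \<sigma> (flip \<sigma> x) = flip_rate q x \<sigma>"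
  unfolding K_def flip_rate_def by (simp add: flip_eq_flip_iff if_distrib[of "\<lambda>b. b * _"] cong: if_cong)

lemma K_eq_0: "\<forall>x\<in>{1..L}. \<tau> \<noteq> flip \<sigma> x \<Longrightarrow> K L q \<sigma> \<tau> = 0"
  unfolding K_def by (intro sum.neutral) auto

lemma K_self: "K L q \<sigma> \<sigma> = 0"
  using K_eq_0 flip_neq by metis

lemma K_nonneg: "0 \<le> q \<Longrightarrow> q \<le> 1 \<Longrightarrow> 0 \<le> K L q \<sigma> \<tau>"
  unfolding K_def by (intro sum_nonneg) (auto simp: constr_def)

lemma R_nonneg: "0 \<le> q \<Longrightarrow> q \<le> 1 \<Longrightarrow> 0 \<le> R L q \<sigma>"
  unfolding R_def by (intro sum_nonneg K_nonneg)

lemma sum_K_mult: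
  assumes "\<sigma> \<in> Omega L"
  shows "(\<Sum>\<tau>\<in>Omega L. K L q \<sigma> \<tau> * f \<tau>) = (\<Sum>x\<in>{1..L}. flip_rate q x \<sigma> * f (flip \<sigma> x))"
proof -
  have "(\<Sum>\<tau>\<in>Omega L. K L q \<sigma> \<tau> * f \<tau>)
      = (\<Sum>\<tau>\<in>Omega L. \<Sum>x\<in>{1..L}. if \<tau> = flip \<sigma> x then flip_rate q x \<sigma> * f (flip \<sigma> x) else 0)"
    unfolding K_def flip_rate_def sum_distrib_right by (intro sum.cong refl) auto
  also have "\<dots> = (\<Sum>x\<in>{1..L}. flip_rate q x \<sigma> * f (flip \<sigma> x))"
    using assms flip_in_Omega by (subst sum.swap) (simp add: finite_Omega)
  finally show ?thesis .
qed

lemma R_eq_sum_K: "\<sigma> \<in> Omega L \<Longrightarrow> R L q \<sigma> = (\<Sum>\<tau>\<in>Omega L. K L q \<sigma> \<tau>)"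
  unfolding R_def by (simp add: finite_Omega sum.remove K_self)

lemma R_eq_sum_flip_rate: "\<sigma> \<in> Omega L \<Longrightarrow> R L q \<sigma> = (\<Sum>x\<in>{1..L}. flip_rate q x \<sigma>)"
  using sum_K_mult[of \<sigma> L q "\<lambda>_. 1"] R_eq_sum_K by simp

lemma pi_east_split:
  "x \<in> {1..L} \<Longrightarrow>
   pi_east L q \<sigma> = (if \<sigma> x then 1 - q else q) * (\<Prod>y\<in>{1..L}-{x}. if \<sigma> y then 1 - q else q)"
  unfolding pi_east_def by (simp add: prod.remove)

lemma detailed_balance: "pi_east L q \<sigma> * K L q \<sigma> \<tau> = pi_east L q \<tau> * K L q \<tau> \<sigma>"
proof (cases "\<exists>x\<in>{1..L}. \<tau> = flip \<sigma> x")
  case True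
  then obtain x where x: "x \<in> {1..L}" and \<tau>: "\<tau> = flip \<sigma> x" by blast
  let ?rest = "\<lambda>\<sigma>. \<Prod>y\<in>{1..L}-{x}. if \<sigma> y then 1 - q else q"
  have rest: "?rest \<tau> = ?rest \<sigma>"
    unfolding \<tau> flip_def by (intro prod.cong) auto
  have "pi_east L q \<sigma> * K L q \<sigma> \<tau> = ?rest \<sigma> * constr x \<sigma> * (q * (1 - q))"
    using x by (simp add: \<tau> K_flip pi_east_split[OF x] flip_rate_def)
  also have "\<dots> = pi_east L q \<tau> * K L q \<tau> \<sigma>"
    using x K_flip[OF x, of q \<tau>]
    by (simp add: \<tau> pi_east_split[OF x] flip_rate_def constr_flip rest[unfolded \<tau>])
       (simp add: flip_def)
  finally show ?thesis .
next
  case False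
  then have "\<forall>x\<in>{1..L}. \<sigma> \<noteq> flip \<tau> x" by (metis flip_flip)
  with False show ?thesis by (simp add: K_eq_0)
qed

definition generator :: "nat \<Rightarrow> real \<Rightarrow> (config \<Rightarrow> real) \<Rightarrow> config \<Rightarrow> real" where
  "generator L q f \<sigma> = (\<Sum>\<tau>\<in>Omega L. K L q \<sigma> \<tau> * f \<tau>) - R L q \<sigma> * f \<sigma>"

lemma generator_self_adjoint:
  "(\<Sum>\<sigma>\<in>Omega L. pi_east L q \<sigma> * f \<sigma> * generator L q g \<sigma>)
   = (\<Sum>\<sigma>\<in>Omega L. pi_east L q \<sigma> * g \<sigma> * generator L q f \<sigma>)"
proof -
  have "(\<Sum>\<sigma>\<in>Omega L. pi_east L q \<sigma> * f \<sigma> * (\<Sum>\<tau>\<in>Omega L. K L q \<sigma> \<tau> * g \<tau>))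
      = (\<Sum>\<sigma>\<in>Omega L. \<Sum>\<tau>\<in>Omega L. pi_east L q \<tau> * K L q \<tau> \<sigma> * (f \<sigma> * g \<tau>))"
    by (simp add: sum_distrib_left detailed_balance mult_ac)
  also have "\<dots> = (\<Sum>\<sigma>\<in>Omega L. pi_east L q \<sigma> * g \<sigma> * (\<Sum>\<tau>\<in>Omega L. K L q \<sigma> \<tau> * f \<tau>))"
    by (subst sum.swap) (simp add: sum_distrib_left mult_ac)
  finally show ?thesis
    unfolding generator_def by (simp add: right_diff_distrib sum_subtractf mult_ac)
qed

section \<open>Path decompositions of the jump chain\<close>

definition jump_prob :: "nat \<Rightarrow> real \<Rightarrow> config \<Rightarrow> config \<Rightarrow> real" where
  "jump_prob L q \<sigma> \<tau> = K L q \<sigma> \<tau> / R L q \<sigma>"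

text \<open>\<open>survival_prob L q B n \<sigma>\<close> is the probability that the jump chain avoids \<open>B\<close> at steps
  \<open>0..n\<close>, while \<open>first_hit_prob\<close> and \<open>hit_time_term\<close> at index \<open>n\<close> refer to entering \<open>B\<close> at step
  \<open>n + 1\<close>, as do the summands of \<open>exp_hit\<close> and \<open>escape_prob\<close>.\<close>

definition survival_prob :: "nat \<Rightarrow> real \<Rightarrow> config set \<Rightarrow> nat \<Rightarrow> config \<Rightarrow> real" where
  "survival_prob L q B n \<sigma> = (\<Sum>ys\<in>paths L n.
     if \<forall>i\<le>n. (\<sigma> # ys) ! i \<notin> B then path_prob L q (\<sigma> # ys) else 0)"

definition first_hit_prob :: "nat \<Rightarrow> real \<Rightarrow> config set \<Rightarrow> nat \<Rightarrow> config \<Rightarrow> real" where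
  "first_hit_prob L q B n \<sigma> = (\<Sum>ys\<in>paths L (Suc n).
     if (\<sigma> # ys) ! Suc n \<in> B \<and> (\<forall>i\<le>n. (\<sigma> # ys) ! i \<notin> B) then path_prob L q (\<sigma> # ys) else 0)"

definition hit_time_term :: "nat \<Rightarrow> real \<Rightarrow> config set \<Rightarrow> nat \<Rightarrow> config \<Rightarrow> real" where
  "hit_time_term L q B n \<sigma> = (\<Sum>ys\<in>paths L (Suc n).
     if (\<sigma> # ys) ! Suc n \<in> B \<and> (\<forall>i\<le>n. (\<sigma> # ys) ! i \<notin> B)
     then path_prob L q (\<sigma> # ys) * (\<Sum>i\<le>n. 1 / R L q ((\<sigma> # ys) ! i)) else 0)"

definition escape_term :: "nat \<Rightarrow> real \<Rightarrow> config set \<Rightarrow> config set \<Rightarrow> nat \<Rightarrow> config \<Rightarrow> real" where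
  "escape_term L q A B n \<sigma> = (\<Sum>ys\<in>paths L (Suc n).
     if (\<sigma> # ys) ! Suc n \<in> B \<and> (\<forall>i\<in>{1..n}. (\<sigma> # ys) ! i \<notin> A \<union> B)
     then path_prob L q (\<sigma> # ys) else 0)"

lemma exp_hit_eq_suminf: "exp_hit L q \<sigma> B = (\<Sum>n. hit_time_term L q B n \<sigma>)"
  unfolding exp_hit_def hit_time_term_def Let_def ..

lemma escape_prob_eq_suminf: "escape_prob L q \<sigma> A B = (\<Sum>n. escape_term L q A B n \<sigma>)"
  unfolding escape_prob_def escape_term_def Let_def ..

lemma all_atMost_Suc_conv: "(\<forall>i\<le>Suc n. Q i) \<longleftrightarrow> Q 0 \<and> (\<forall>i\<le>n. Q (Suc i))"
proof
  assume Q: "Q 0 \<and> (\<forall>i\<le>n. Q (Suc i))"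
  show "\<forall>i\<le>Suc n. Q i"
  proof (intro allI impI)
    fix i assume "i \<le> Suc n" then show "Q i" using Q by (cases i) auto
  qed
qed simp

lemma all_1_Suc_conv: "(\<forall>i\<in>{1..Suc n}. Q i) \<longleftrightarrow> Q 1 \<and> (\<forall>i\<in>{1..n}. Q (Suc i))"
proof
  assume Q: "Q 1 \<and> (\<forall>i\<in>{1..n}. Q (Suc i))"
  show "\<forall>i\<in>{1..Suc n}. Q i"
  proof
    fix i assume "i \<in> {1..Suc n}"
    then obtain j where "i = Suc j" "j \<le> n" by (cases i) auto
    then show "Q i" using Q by (cases "j = 0") auto
  qed
qed simp

lemma survival_prob_in: "\<sigma> \<in> B \<Longrightarrow> survival_prob L q B n \<sigma> = 0"
  unfolding survival_prob_def by (intro sum.neutral) (metis le0 nth_Cons_0)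

lemma first_hit_prob_in: "\<sigma> \<in> B \<Longrightarrow> first_hit_prob L q B n \<sigma> = 0"
  unfolding first_hit_prob_def by (intro sum.neutral) (metis le0 nth_Cons_0)

lemma hit_time_term_in: "\<sigma> \<in> B \<Longrightarrow> hit_time_term L q B n \<sigma> = 0"
  unfolding hit_time_term_def by (intro sum.neutral) (metis le0 nth_Cons_0)

lemma path_prob_pair: "path_prob L q [\<sigma>, \<tau>] = jump_prob L q \<sigma> \<tau>"
  using path_prob_Cons_Cons[of L q \<sigma> \<tau> "[]"] by (simp add: path_prob_singleton jump_prob_def)

lemma survival_prob_0: "survival_prob L q B 0 \<sigma> = (if \<sigma> \<in> B then 0 else 1)"
  unfolding survival_prob_def paths_0 by (simp add: path_prob_singleton)

lemma survival_prob_Suc: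
  "survival_prob L q B (Suc n) \<sigma>
   = (if \<sigma> \<in> B then 0 else \<Sum>\<tau>\<in>Omega L. jump_prob L q \<sigma> \<tau> * survival_prob L q B n \<tau>)"
  unfolding survival_prob_def sum_paths_Suc
  by (simp add: all_atMost_Suc_conv path_prob_Cons_Cons sum_distrib_left jump_prob_def if_distrib
      cong: if_cong)

lemma first_hit_prob_0:
  "first_hit_prob L q B 0 \<sigma> = (if \<sigma> \<in> B then 0 else \<Sum>\<tau>\<in>Omega L. if \<tau> \<in> B then jump_prob L q \<sigma> \<tau> else 0)"
  unfolding first_hit_prob_def sum_paths_Suc paths_0 by (auto simp: path_prob_pair intro!: sum.cong)

lemma first_hit_prob_Suc:
  "first_hit_prob L q B (Suc n) \<sigma>
   = (if \<sigma> \<in> B then 0 else \<Sum>\<tau>\<in>Omega L. jump_prob L q \<sigma> \<tau> * first_hit_prob L q B n \<tau>)"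
  unfolding first_hit_prob_def sum_paths_Suc[where n = "Suc n"]
  by (simp add: all_atMost_Suc_conv path_prob_Cons_Cons sum_distrib_left jump_prob_def if_distrib
      cong: if_cong)

lemma hit_time_term_0: "hit_time_term L q B 0 \<sigma> = first_hit_prob L q B 0 \<sigma> / R L q \<sigma>"
  unfolding hit_time_term_def first_hit_prob_def sum_divide_distrib by (intro sum.cong refl) auto

lemma hit_time_term_Suc:
  "hit_time_term L q B (Suc n) \<sigma> = first_hit_prob L q B (Suc n) \<sigma> / R L q \<sigma> +
   (if \<sigma> \<in> B then 0 else \<Sum>\<tau>\<in>Omega L. jump_prob L q \<sigma> \<tau> * hit_time_term L q B n \<tau>)"
proof (cases "\<sigma> \<in> B")
  case True
  then show ?thesis by (simp add: hit_time_term_in first_hit_prob_in)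
next
  case False
  let ?ok = "\<lambda>\<tau> ys. (\<tau> # ys) ! Suc n \<in> B \<and> (\<forall>i\<le>n. (\<tau> # ys) ! i \<notin> B)"
  have "hit_time_term L q B (Suc n) \<sigma> = (\<Sum>\<tau>\<in>Omega L. \<Sum>ys\<in>paths L (Suc n).
     (if ?ok \<tau> ys then jump_prob L q \<sigma> \<tau> * path_prob L q (\<tau> # ys) else 0) / R L q \<sigma>
     + jump_prob L q \<sigma> \<tau> * (if ?ok \<tau> ys
         then path_prob L q (\<tau> # ys) * (\<Sum>i\<le>n. 1 / R L q ((\<tau> # ys) ! i)) else 0))"
    unfolding hit_time_term_def sum_paths_Suc[where n = "Suc n"] sum.atMost_Suc_shift all_atMost_Suc_conv
    using False
    by (intro sum.cong refl)
       (auto simp: path_prob_Cons_Cons jump_prob_def algebra_simps add_divide_distrib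
        simp del: nth_Cons_Suc)
  also have "\<dots> = first_hit_prob L q B (Suc n) \<sigma> / R L q \<sigma>
      + (\<Sum>\<tau>\<in>Omega L. jump_prob L q \<sigma> \<tau> * hit_time_term L q B n \<tau>)"
    unfolding first_hit_prob_def hit_time_term_def sum_paths_Suc[where n = "Suc n"] sum.distrib
      sum_distrib_left sum_divide_distrib
    using False
    by (simp add: all_atMost_Suc_conv path_prob_Cons_Cons jump_prob_def if_distrib cong: if_cong)
  finally show ?thesis using False by simp
qed

lemma escape_term_0:
  "escape_term L q A B 0 \<sigma> = (\<Sum>\<tau>\<in>Omega L. if \<tau> \<in> B then jump_prob L q \<sigma> \<tau> else 0)"
  unfolding escape_term_def sum_paths_Suc paths_0 by (auto simp: path_prob_pair intro!: sum.cong)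

lemma escape_term_Suc:
  "escape_term L q A B (Suc n) \<sigma>
   = (\<Sum>\<tau>\<in>Omega L. (if \<tau> \<in> A \<union> B then 0 else jump_prob L q \<sigma> \<tau>) * escape_term L q A B n \<tau>)"
  unfolding escape_term_def sum_paths_Suc[where n = "Suc n"] all_1_Suc_conv
  by (intro sum.cong refl)
     (simp add: path_prob_Cons_Cons sum_distrib_left jump_prob_def if_distrib cong: if_cong)

locale east_process =
  fixes L :: nat and q :: real
  assumes q_pos: "0 < q" and q_le_half: "q \<le> 1/2" and L_pos: "0 < L"
begin

lemma q_le_1: "q \<le> 1"
  using q_le_half by simp

lemma R_ge_q: "\<sigma> \<in> Omega L \<Longrightarrow> q \<le> R L q \<sigma>"
proof -
  assume \<sigma>: "\<sigma> \<in> Omega L"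
  have "q \<le> flip_rate q 1 \<sigma>"
    unfolding flip_rate_def constr_def using q_le_half by auto
  also have "\<dots> \<le> (\<Sum>x\<in>{1..L}. flip_rate q x \<sigma>)"
    using L_pos q_pos q_le_1 by (intro member_le_sum flip_rate_nonneg) auto
  finally show ?thesis using R_eq_sum_flip_rate[OF \<sigma>] by simp
qed

lemma R_pos: "\<sigma> \<in> Omega L \<Longrightarrow> 0 < R L q \<sigma>"
  using R_ge_q q_pos by force

lemma R_le_L: "\<sigma> \<in> Omega L \<Longrightarrow> R L q \<sigma> \<le> L"
proof -
  assume \<sigma>: "\<sigma> \<in> Omega L"
  have "(\<Sum>x\<in>{1..L}. flip_rate q x \<sigma>) \<le> (\<Sum>x\<in>{1..L}. 1)"
    by (intro sum_mono flip_rate_le_1) (use q_pos q_le_1 in auto)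
  then show ?thesis using R_eq_sum_flip_rate[OF \<sigma>] by simp
qed

lemma jump_prob_nonneg: "0 \<le> jump_prob L q \<sigma> \<tau>"
  unfolding jump_prob_def using q_pos q_le_1 by (intro divide_nonneg_nonneg K_nonneg R_nonneg) auto

lemma sum_jump_prob: "\<sigma> \<in> Omega L \<Longrightarrow> (\<Sum>\<tau>\<in>Omega L. jump_prob L q \<sigma> \<tau>) = 1"
  unfolding jump_prob_def sum_divide_distrib[symmetric]
  using R_eq_sum_K R_pos by (simp add: less_imp_neq[symmetric])

lemma sum_K_eq_R_mult_sum_jump_prob:
  "\<sigma> \<in> Omega L \<Longrightarrow> (\<Sum>\<tau>\<in>Omega L. K L q \<sigma> \<tau> * f \<tau>) = R L q \<sigma> * (\<Sum>\<tau>\<in>Omega L. jump_prob L q \<sigma> \<tau> * f \<tau>)"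
  using R_pos unfolding jump_prob_def by (simp add: sum_distrib_left less_imp_neq[symmetric])

lemma path_prob_nonneg: "0 \<le> path_prob L q xs"
  unfolding path_prob_def using q_pos q_le_1
  by (intro prod_nonneg ballI divide_nonneg_nonneg K_nonneg R_nonneg) auto

lemma survival_prob_nonneg: "0 \<le> survival_prob L q B n \<sigma>"
  unfolding survival_prob_def by (intro sum_nonneg) (simp add: path_prob_nonneg)

lemma first_hit_prob_nonneg: "0 \<le> first_hit_prob L q B n \<sigma>"
  unfolding first_hit_prob_def by (intro sum_nonneg) (simp add: path_prob_nonneg)

lemma hit_time_term_nonneg: "0 \<le> hit_time_term L q B n \<sigma>"
  unfolding hit_time_term_def using q_pos q_le_1
  by (intro sum_nonneg) (auto intro!: mult_nonneg_nonneg sum_nonneg path_prob_nonneg R_nonneg)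

lemma escape_term_nonneg: "0 \<le> escape_term L q A B n \<sigma>"
  unfolding escape_term_def by (intro sum_nonneg) (simp add: path_prob_nonneg)

lemma survival_prob_le_1: "\<sigma> \<in> Omega L \<Longrightarrow> survival_prob L q B n \<sigma> \<le> 1"
proof (induction n arbitrary: \<sigma>)
  case (Suc n)
  have "(\<Sum>\<tau>\<in>Omega L. jump_prob L q \<sigma> \<tau> * survival_prob L q B n \<tau>) \<le> (\<Sum>\<tau>\<in>Omega L. jump_prob L q \<sigma> \<tau>)"
    using Suc.IH by (intro sum_mono) (simp add: jump_prob_nonneg mult_left_le)
  then show ?case using sum_jump_prob[OF Suc.prems] by (simp add: survival_prob_Suc)
qed (simp add: survival_prob_0)

lemma first_hit_prob_eq_survival_prob_diff:
  "\<sigma> \<in> Omega L \<Longrightarrow> first_hit_prob L q B n \<sigma> = survival_prob L q B n \<sigma> - survival_prob L q B (Suc n) \<sigma>"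
proof (induction n arbitrary: \<sigma>)
  case 0
  have "(\<Sum>\<tau>\<in>Omega L. if \<tau> \<in> B then jump_prob L q \<sigma> \<tau> else 0)
      + (\<Sum>\<tau>\<in>Omega L. if \<tau> \<in> B then 0 else jump_prob L q \<sigma> \<tau>) = 1"
    using sum_jump_prob[OF 0] by (subst sum.distrib[symmetric], subst sum.cong) auto
  then show ?case
    by (simp add: first_hit_prob_0 survival_prob_Suc survival_prob_0 if_distrib[of "\<lambda>x. _ * x"]
        cong: if_cong)
next
  case (Suc n)
  then show ?case
    by (simp add: first_hit_prob_Suc survival_prob_Suc[of _ _ _ "Suc n"] sum_subtractf[symmetric]
        right_diff_distrib survival_prob_Suc[of _ _ _ n] cong: sum.cong)
qed

lemma survival_prob_antimono:
  assumes "\<sigma> \<in> Omega L" "m \<le> n"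
  shows "survival_prob L q B n \<sigma> \<le> survival_prob L q B m \<sigma>"
  using assms(2)
proof (induction n rule: dec_induct)
  case (step n)
  then show ?case
    using first_hit_prob_eq_survival_prob_diff[OF assms(1), of B n] first_hit_prob_nonneg[of B n \<sigma>]
    by linarith
qed simp

section \<open>Geometric decay of the survival probability\<close>

lemma survival_prob_add_le:
  assumes bound: "\<And>\<tau>. \<tau> \<in> Omega L \<Longrightarrow> survival_prob L q B N \<tau> \<le> \<beta>"
  shows "\<sigma> \<in> Omega L \<Longrightarrow> survival_prob L q B (k + N) \<sigma> \<le> \<beta> * survival_prob L q B k \<sigma>"
proof (induction k arbitrary: \<sigma>)
  case 0
  then show ?case
    using bound by (cases "\<sigma> \<in> B") (simp_all add: survival_prob_in survival_prob_0)
next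
  case (Suc k)
  show ?case
  proof (cases "\<sigma> \<in> B")
    case False
    have "survival_prob L q B (Suc k + N) \<sigma> = (\<Sum>\<tau>\<in>Omega L. jump_prob L q \<sigma> \<tau> * survival_prob L q B (k + N) \<tau>)"
      using False by (simp add: survival_prob_Suc)
    also have "\<dots> \<le> (\<Sum>\<tau>\<in>Omega L. jump_prob L q \<sigma> \<tau> * (\<beta> * survival_prob L q B k \<tau>))"
      using Suc.IH by (intro sum_mono mult_left_mono) (simp_all add: jump_prob_nonneg)
    also have "\<dots> = \<beta> * survival_prob L q B (Suc k) \<sigma>"
      using False by (simp add: survival_prob_Suc sum_distrib_left algebra_simps)
    finally show ?thesis .
  qed (simp add: survival_prob_in)
qed

lemma survival_prob_Suc_le:
  assumes "\<sigma> \<in> Omega L" "\<sigma> \<notin> B" "\<tau> \<in> Omega L"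
  shows "survival_prob L q B (Suc n) \<sigma> \<le> 1 - jump_prob L q \<sigma> \<tau> * (1 - survival_prob L q B n \<tau>)"
proof -
  have "survival_prob L q B (Suc n) \<sigma>
      = jump_prob L q \<sigma> \<tau> * survival_prob L q B n \<tau>
        + (\<Sum>\<tau>'\<in>Omega L - {\<tau>}. jump_prob L q \<sigma> \<tau>' * survival_prob L q B n \<tau>')"
    using assms by (simp add: survival_prob_Suc sum.remove[OF finite_Omega assms(3)])
  also have "(\<Sum>\<tau>'\<in>Omega L - {\<tau>}. jump_prob L q \<sigma> \<tau>' * survival_prob L q B n \<tau>')
      \<le> (\<Sum>\<tau>'\<in>Omega L - {\<tau>}. jump_prob L q \<sigma> \<tau>')"
    using survival_prob_le_1 by (intro sum_mono) (simp add: jump_prob_nonneg mult_left_le)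
  also have "\<dots> = 1 - jump_prob L q \<sigma> \<tau>"
    using sum_jump_prob[OF assms(1)] by (simp add: sum.remove[OF finite_Omega assms(3)])
  finally show ?thesis by (simp add: algebra_simps)
qed

definition count_ones :: "config \<Rightarrow> nat" where
  "count_ones \<sigma> = card {x\<in>{1..<L}. \<sigma> x}"

lemma count_ones_less_L: "count_ones \<sigma> < L"
proof -
  have "count_ones \<sigma> \<le> card {1..<L}"
    unfolding count_ones_def by (intro card_mono) auto
  then show ?thesis using L_pos by simp
qed

text \<open>From any configuration with \<open>\<sigma>\<^sub>L = 0\<close>, flipping the leftmost one (or site \<open>L\<close> if there is
  none below \<open>L\<close>) is a move of probability at least \<open>q/L\<close> that either reaches \<open>B\<close> or
  decreases the number of ones.\<close>
lemma exists_likely_progress_flip: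
  assumes \<sigma>: "\<sigma> \<in> Omega L" and not_B: "\<not> \<sigma> L"
  obtains x where "x \<in> {1..L}" "q / L \<le> jump_prob L q \<sigma> (flip \<sigma> x)"
    "flip \<sigma> x L \<or> count_ones (flip \<sigma> x) < count_ones \<sigma>"
proof -
  have "\<exists>x\<in>{1..L}. q \<le> flip_rate q x \<sigma> \<and> (flip \<sigma> x L \<or> count_ones (flip \<sigma> x) < count_ones \<sigma>)"
  proof (cases "\<exists>y\<in>{1..<L}. \<sigma> y")
    case True
    then obtain y where y: "y \<in> {1..<L}" "\<sigma> y" by blast
    define x where "x = (LEAST i. \<sigma> i)"
    have "\<sigma> x" "x \<le> y" unfolding x_def using y by (auto intro: LeastI Least_le)
    moreover have "1 \<le> x" using \<open>\<sigma> x\<close> Omega_outside[OF \<sigma>, of 0] by (cases x) auto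
    moreover have "\<not> \<sigma> (x - 1)" if "x \<noteq> 1"
      using that \<open>1 \<le> x\<close> unfolding x_def by (intro not_less_Least) simp
    ultimately have x: "x \<in> {1..<L}" "\<sigma> x" "flip_rate q x \<sigma> = q"
      using y unfolding flip_rate_def constr_def by auto
    have ones: "{i\<in>{1..<L}. flip \<sigma> x i} = {i\<in>{1..<L}. \<sigma> i} - {x}"
      unfolding flip_def using x by auto
    have "count_ones (flip \<sigma> x) < count_ones \<sigma>"
      unfolding count_ones_def ones by (rule card_Diff1_less) (use x in auto)
    then show ?thesis using x by (intro bexI[of _ x]) auto
  next
    case False
    then have "flip_rate q L \<sigma> = 1 - q"
      unfolding flip_rate_def constr_def using L_pos not_B by auto
    then show ?thesis using L_pos q_le_half not_B by (intro bexI[of _ L]) (auto simp: flip_def)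
  qed
  then obtain x where x: "x \<in> {1..L}" "q \<le> flip_rate q x \<sigma>"
    "flip \<sigma> x L \<or> count_ones (flip \<sigma> x) < count_ones \<sigma>" by blast
  have "q / L \<le> flip_rate q x \<sigma> / R L q \<sigma>"
    using x(2) R_le_L[OF \<sigma>] R_pos[OF \<sigma>] q_pos by (simp add: frac_le)
  then show thesis using that x by (simp add: jump_prob_def K_flip)
qed

lemma survival_prob_le_if_count_ones_less:
  "\<sigma> \<in> Omega L \<Longrightarrow> count_ones \<sigma> < n \<Longrightarrow> survival_prob L q (B_set L) n \<sigma> \<le> 1 - (q / L) ^ n"
proof (induction n arbitrary: \<sigma>)
  case (Suc n)
  have \<delta>: "0 \<le> q / L" "q / L \<le> 1"
    using q_pos q_le_1 L_pos by (auto simp: divide_le_eq_1)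
  show ?case
  proof (cases "\<sigma> \<in> B_set L")
    case True
    have "(q / L) ^ Suc n \<le> 1" using \<delta> by (rule power_le_one)
    then show ?thesis using True by (simp add: survival_prob_in del: power_Suc)
  next
    case False
    obtain x where x: "x \<in> {1..L}" "q / L \<le> jump_prob L q \<sigma> (flip \<sigma> x)"
      "flip \<sigma> x L \<or> count_ones (flip \<sigma> x) < count_ones \<sigma>"
      using exists_likely_progress_flip Suc.prems False in_B_set_iff by metis
    have \<tau>: "flip \<sigma> x \<in> Omega L" using flip_in_Omega[OF Suc.prems(1) x(1)] .
    have "survival_prob L q (B_set L) n (flip \<sigma> x) \<le> 1 - (q / L) ^ n"
      using x(3) Suc.IH[OF \<tau>] Suc.prems(2) \<delta>
      by (auto simp: survival_prob_in in_B_set_iff[OF \<tau>] power_le_one)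
    then have "(q / L) ^ n \<le> 1 - survival_prob L q (B_set L) n (flip \<sigma> x)" by simp
    then have "(q / L) * (q / L) ^ n \<le> jump_prob L q \<sigma> (flip \<sigma> x) * (1 - survival_prob L q (B_set L) n (flip \<sigma> x))"
      using x(2) \<delta> by (intro mult_mono) auto
    then show ?thesis
      using survival_prob_Suc_le[OF Suc.prems(1) False \<tau>, of n] by simp
  qed
qed simp

lemma survival_prob_exponential_decay:
  obtains \<theta> C where "0 < \<theta>" "\<theta> < 1"
    "\<And>n \<sigma>. \<sigma> \<in> Omega L \<Longrightarrow> survival_prob L q (B_set L) n \<sigma> \<le> C * \<theta> ^ n"
proof -
  define \<rho> where "\<rho> = 1 - (q / L) ^ L"
  have "0 < q / L" "q / L < 1" using q_pos q_le_half L_pos by auto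
  then have \<rho>: "0 < \<rho>" "\<rho> < 1"
    unfolding \<rho>_def using L_pos by (auto simp: power_less_one_iff)
  define \<theta> where "\<theta> = root L \<rho>"
  have \<theta>: "0 < \<theta>" "\<theta> < 1" "\<theta> ^ L = \<rho>"
    unfolding \<theta>_def using \<rho> L_pos by (auto simp: real_root_pow_pos)
  have block: "survival_prob L q (B_set L) (j * L) \<sigma> \<le> \<rho> ^ j" if "\<sigma> \<in> Omega L" for j \<sigma>
    using that
  proof (induction j arbitrary: \<sigma>)
    case (Suc j)
    have "survival_prob L q (B_set L) (j * L + L) \<sigma> \<le> \<rho> * survival_prob L q (B_set L) (j * L) \<sigma>"
      using survival_prob_add_le survival_prob_le_if_count_ones_less count_ones_less_L Suc.prems
      unfolding \<rho>_def by blast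
    also have "\<dots> \<le> \<rho> * \<rho> ^ j" using Suc \<rho> by (simp add: mult_left_mono)
    finally show ?case by (simp add: add.commute)
  qed (simp add: survival_prob_le_1)
  have "survival_prob L q (B_set L) n \<sigma> \<le> 1 / \<rho> * \<theta> ^ n" if \<sigma>: "\<sigma> \<in> Omega L" for n \<sigma>
  proof -
    have "survival_prob L q (B_set L) n \<sigma> \<le> survival_prob L q (B_set L) (n div L * L) \<sigma>"
      using survival_prob_antimono[OF \<sigma>] by simp
    also have "\<dots> \<le> \<rho> ^ (n div L)" using block[OF \<sigma>] .
    also have "\<dots> = \<theta> ^ (L * (n div L))" by (simp add: power_mult \<theta>)
    also have "\<dots> \<le> \<theta> ^ n / \<theta> ^ (n mod L)"
      using \<theta> by (simp add: power_add[symmetric] field_simps)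
    also have "\<dots> \<le> \<theta> ^ n / \<rho>"
      using \<theta> \<rho> L_pos by (intro divide_left_mono power_decreasing) (auto simp: less_imp_le[of "n mod L"])
    finally show ?thesis by simp
  qed
  then show thesis using that \<theta> by blast
qed

lemma first_hit_prob_sums:
  assumes \<sigma>: "\<sigma> \<in> Omega L"
  shows "(\<lambda>n. first_hit_prob L q (B_set L) n \<sigma>) sums survival_prob L q (B_set L) 0 \<sigma>"
proof -
  obtain \<theta> C where \<theta>: "0 < \<theta>" "\<theta> < 1"
    and decay: "\<And>n. survival_prob L q (B_set L) n \<sigma> \<le> C * \<theta> ^ n"
    using survival_prob_exponential_decay \<sigma> by metis
  have "(\<lambda>n. survival_prob L q (B_set L) n \<sigma>) \<longlonglongrightarrow> 0"
  proof (rule real_tendsto_sandwich[OF _ _ tendsto_const])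
    show "(\<lambda>n. C * \<theta> ^ n) \<longlonglongrightarrow> 0"
      using \<theta> by (intro tendsto_mult_right_zero LIMSEQ_power_zero) simp
  qed (use decay survival_prob_nonneg in auto)
  from telescope_sums'[OF this] show ?thesis
    by (simp add: first_hit_prob_eq_survival_prob_diff[OF \<sigma>])
qed

lemma hit_time_term_le:
  "\<sigma> \<in> Omega L \<Longrightarrow> hit_time_term L q B n \<sigma> \<le> (real n + 1) / q * first_hit_prob L q B n \<sigma>"
proof (induction n arbitrary: \<sigma>)
  case 0
  have "first_hit_prob L q B 0 \<sigma> / R L q \<sigma> \<le> first_hit_prob L q B 0 \<sigma> / q"
    using R_ge_q[OF 0] q_pos first_hit_prob_nonneg by (intro divide_left_mono) auto
  then show ?case by (simp add: hit_time_term_0)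
next
  case (Suc n)
  show ?case
  proof (cases "\<sigma> \<in> B")
    case False
    have "first_hit_prob L q B (Suc n) \<sigma> / R L q \<sigma> \<le> first_hit_prob L q B (Suc n) \<sigma> / q"
      using R_ge_q[OF Suc.prems] q_pos first_hit_prob_nonneg by (intro divide_left_mono) auto
    moreover have "(\<Sum>\<tau>\<in>Omega L. jump_prob L q \<sigma> \<tau> * hit_time_term L q B n \<tau>)
        \<le> (\<Sum>\<tau>\<in>Omega L. jump_prob L q \<sigma> \<tau> * ((real n + 1) / q * first_hit_prob L q B n \<tau>))"
      by (intro sum_mono mult_left_mono Suc.IH) (auto simp: jump_prob_nonneg)
    moreover have "\<dots> = (real n + 1) / q * first_hit_prob L q B (Suc n) \<sigma>"
      using False by (simp add: first_hit_prob_Suc sum_distrib_left mult.left_commute)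
    ultimately show ?thesis
      using False by (simp add: hit_time_term_Suc add_divide_distrib algebra_simps)
  qed (simp add: hit_time_term_in first_hit_prob_in)
qed

lemma summable_hit_time_term:
  assumes \<sigma>: "\<sigma> \<in> Omega L"
  shows "summable (\<lambda>n. hit_time_term L q (B_set L) n \<sigma>)"
proof -
  obtain \<theta> C where \<theta>: "0 < \<theta>" "\<theta> < 1"
    and decay: "\<And>n. survival_prob L q (B_set L) n \<sigma> \<le> C * \<theta> ^ n"
    using survival_prob_exponential_decay \<sigma> by metis
  have "summable (\<lambda>n. diffs (\<lambda>_. 1) n * \<theta> ^ n)"
    using \<theta> by (intro termdiff_converges[where K = 1]) auto
  then have "summable (\<lambda>n. C / q * ((real n + 1) * \<theta> ^ n))"
    by (intro summable_mult) (simp add: diffs_def add.commute)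
  then show ?thesis
  proof (rule summable_comparison_test'[where N = 0])
    fix n
    have "first_hit_prob L q (B_set L) n \<sigma> \<le> C * \<theta> ^ n"
      using first_hit_prob_eq_survival_prob_diff[OF \<sigma>, of "B_set L" n]
        survival_prob_nonneg[of "B_set L" "Suc n" \<sigma>] decay[of n]
      by linarith
    then have "(real n + 1) / q * first_hit_prob L q (B_set L) n \<sigma> \<le> (real n + 1) / q * (C * \<theta> ^ n)"
      using q_pos by (intro mult_left_mono) auto
    then have "hit_time_term L q (B_set L) n \<sigma> \<le> (real n + 1) / q * (C * \<theta> ^ n)"
      using hit_time_term_le[OF \<sigma>, of "B_set L" n] by linarith
    then show "norm (hit_time_term L q (B_set L) n \<sigma>) \<le> C / q * ((real n + 1) * \<theta> ^ n)"
      using hit_time_term_nonneg by (simp add: mult_ac)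
  qed
qed

lemma exp_hit_first_step:
  assumes \<sigma>: "\<sigma> \<in> Omega L" and not_B: "\<sigma> \<notin> B_set L"
  shows "exp_hit L q \<sigma> (B_set L)
    = 1 / R L q \<sigma> + (\<Sum>\<tau>\<in>Omega L. jump_prob L q \<sigma> \<tau> * exp_hit L q \<tau> (B_set L))"
proof -
  let ?B = "B_set L"
  let ?H = "\<lambda>n. first_hit_prob L q ?B n \<sigma>" and ?W = "\<lambda>n \<tau>. hit_time_term L q ?B n \<tau>"
  have H: "?H sums 1" using first_hit_prob_sums[OF \<sigma>] not_B by (simp add: survival_prob_0)
  then have H_Suc: "(\<lambda>n. ?H (Suc n)) sums (1 - ?H 0)"
    by (subst sums_Suc_iff) simp
  have summable_W: "summable (\<lambda>n. ?W n \<tau>)" if "\<tau> \<in> Omega L" for \<tau>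
    using summable_hit_time_term that .
  have "(\<lambda>n. \<Sum>\<tau>\<in>Omega L. jump_prob L q \<sigma> \<tau> * ?W n \<tau>)
      sums (\<Sum>\<tau>\<in>Omega L. jump_prob L q \<sigma> \<tau> * exp_hit L q \<tau> ?B)"
    unfolding exp_hit_eq_suminf by (intro sums_sum sums_mult summable_sums summable_W)
  then have "(\<lambda>n. ?W (Suc n) \<sigma>)
      sums ((1 - ?H 0) / R L q \<sigma> + (\<Sum>\<tau>\<in>Omega L. jump_prob L q \<sigma> \<tau> * exp_hit L q \<tau> ?B))"
    unfolding hit_time_term_Suc using not_B by (simp add: sums_add sums_divide[OF H_Suc])
  moreover have "(\<lambda>n. ?W (Suc n) \<sigma>) sums (exp_hit L q \<sigma> ?B - ?W 0 \<sigma>)"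
    unfolding exp_hit_eq_suminf using summable_W[OF \<sigma>] by (subst sums_Suc_iff) (simp add: summable_sums)
  ultimately have "(1 - ?H 0) / R L q \<sigma> + (\<Sum>\<tau>\<in>Omega L. jump_prob L q \<sigma> \<tau> * exp_hit L q \<tau> ?B)
      = exp_hit L q \<sigma> ?B - ?W 0 \<sigma>"
    by (rule sums_unique2)
  then show ?thesis by (simp add: hit_time_term_0 diff_divide_distrib)
qed

section \<open>Escape probabilities and capacity\<close>

lemma escape_term_partial_sum_le_1:
  "\<sigma> \<in> Omega L \<Longrightarrow> (\<Sum>n<N. escape_term L q A B n \<sigma>) \<le> 1"
proof (induction N arbitrary: \<sigma>)
  case (Suc N)
  let ?c = "\<lambda>\<tau>. if \<tau> \<in> A \<union> B then 0 else jump_prob L q \<sigma> \<tau>"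
  have "(\<Sum>n<Suc N. escape_term L q A B n \<sigma>)
      = escape_term L q A B 0 \<sigma> + (\<Sum>\<tau>\<in>Omega L. ?c \<tau> * (\<Sum>n<N. escape_term L q A B n \<tau>))"
    unfolding sum.lessThan_Suc_shift escape_term_Suc
    by (subst sum.swap) (simp add: sum_distrib_left)
  also have "\<dots> \<le> escape_term L q A B 0 \<sigma> + (\<Sum>\<tau>\<in>Omega L. ?c \<tau>)"
    using Suc.IH by (intro add_left_mono sum_mono) (auto simp: jump_prob_nonneg mult_left_le)
  also have "\<dots> \<le> (\<Sum>\<tau>\<in>Omega L. jump_prob L q \<sigma> \<tau>)"
    unfolding escape_term_0 sum.distrib[symmetric] by (intro sum_mono) (auto simp: jump_prob_nonneg)
  finally show ?case using sum_jump_prob[OF Suc.prems] by simp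
qed simp

lemma summable_escape_term: "\<sigma> \<in> Omega L \<Longrightarrow> summable (\<lambda>n. escape_term L q A B n \<sigma>)"
  by (rule summableI_nonneg_bounded[where x = 1])
     (auto intro: escape_term_nonneg escape_term_partial_sum_le_1)

lemma escape_prob_nonneg: "\<sigma> \<in> Omega L \<Longrightarrow> 0 \<le> escape_prob L q \<sigma> A B"
  unfolding escape_prob_eq_suminf by (intro suminf_nonneg summable_escape_term escape_term_nonneg)

lemma escape_prob_le_1: "\<sigma> \<in> Omega L \<Longrightarrow> escape_prob L q \<sigma> A B \<le> 1"
  unfolding escape_prob_eq_suminf
  by (rule suminf_le_const[OF summable_escape_term escape_term_partial_sum_le_1])

lemma escape_prob_first_step:
  assumes \<sigma>: "\<sigma> \<in> Omega L"
  shows "escape_prob L q \<sigma> A B = (\<Sum>\<tau>\<in>Omega L. if \<tau> \<in> B then jump_prob L q \<sigma> \<tau> else 0)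
     + (\<Sum>\<tau>\<in>Omega L. (if \<tau> \<in> A \<union> B then 0 else jump_prob L q \<sigma> \<tau>) * escape_prob L q \<tau> A B)"
proof -
  let ?S = "\<Sum>\<tau>\<in>Omega L. (if \<tau> \<in> A \<union> B then 0 else jump_prob L q \<sigma> \<tau>) * escape_prob L q \<tau> A B"
  have "(\<lambda>n. escape_term L q A B (Suc n) \<sigma>) sums ?S"
    unfolding escape_term_Suc escape_prob_eq_suminf
    by (intro sums_sum sums_mult summable_sums summable_escape_term)
  then have "(\<lambda>n. escape_term L q A B n \<sigma>) sums (?S + escape_term L q A B 0 \<sigma>)"
    by (rule sums_Suc)
  then show ?thesis
    unfolding escape_prob_eq_suminf by (simp add: sums_iff escape_term_0 add.commute)
qed

end

text \<open>Outside \<open>{a} \<union> B\<close>, \<open>escape_prob L q \<sigma> {a} B\<close> is the probability of reaching \<open>B\<close> before \<open>a\<close>,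
  so this is the equilibrium potential \<open>h(\<sigma>) = P\<^sub>\<sigma>(\<tau>\<^sub>a < \<tau>\<^sub>B)\<close>.\<close>
definition equilibrium_potential :: "nat \<Rightarrow> real \<Rightarrow> config \<Rightarrow> config set \<Rightarrow> config \<Rightarrow> real" where
  "equilibrium_potential L q a B \<sigma> =
     (if \<sigma> = a then 1 else if \<sigma> \<in> B then 0 else 1 - escape_prob L q \<sigma> {a} B)"

context east_process
begin

lemma equilibrium_potential_bounds:
  "\<sigma> \<in> Omega L \<Longrightarrow> 0 \<le> equilibrium_potential L q a B \<sigma> \<and> equilibrium_potential L q a B \<sigma> \<le> 1"
  unfolding equilibrium_potential_def using escape_prob_nonneg escape_prob_le_1 by auto

lemma generator_equilibrium_potential:
  assumes a: "a \<notin> B" and \<sigma>: "\<sigma> \<in> Omega L" "\<sigma> \<notin> B"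
  shows "generator L q (equilibrium_potential L q a B) \<sigma>
    = (if \<sigma> = a then - R L q a * escape_prob L q a {a} B else 0)"
proof -
  let ?h = "equilibrium_potential L q a B" and ?P = "jump_prob L q \<sigma>"
  have "(\<Sum>\<tau>\<in>Omega L. ?P \<tau> * ?h \<tau>)
      = (\<Sum>\<tau>\<in>Omega L. ?P \<tau> - (if \<tau> \<in> B then ?P \<tau> else 0)
          - (if \<tau> \<in> {a} \<union> B then 0 else ?P \<tau>) * escape_prob L q \<tau> {a} B)"
    using a by (intro sum.cong refl) (auto simp: equilibrium_potential_def algebra_simps)
  also have "\<dots> = 1 - escape_prob L q \<sigma> {a} B"
    using escape_prob_first_step[OF \<sigma>(1), of "{a}" B] sum_jump_prob[OF \<sigma>(1)]
    by (simp add: sum_subtractf)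
  finally have sum_h: "(\<Sum>\<tau>\<in>Omega L. ?P \<tau> * ?h \<tau>) = 1 - escape_prob L q \<sigma> {a} B" .
  show ?thesis
    unfolding generator_def sum_K_eq_R_mult_sum_jump_prob[OF \<sigma>(1)] sum_h
    using \<sigma>(2) by (simp add: equilibrium_potential_def algebra_simps)
qed

lemma generator_exp_hit:
  assumes "\<sigma> \<in> Omega L" "\<sigma> \<notin> B_set L"
  shows "generator L q (\<lambda>\<tau>. exp_hit L q \<tau> (B_set L)) \<sigma> = -1"
  using exp_hit_first_step[OF assms] R_pos[OF assms(1)]
  unfolding generator_def sum_K_eq_R_mult_sum_jump_prob[OF assms(1)] by (simp add: algebra_simps)

lemma exp_hit_in: "\<sigma> \<in> B \<Longrightarrow> exp_hit L q \<sigma> B = 0"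
  unfolding exp_hit_eq_suminf by (simp add: hit_time_term_in)

lemma exp_hit_mult_capacity:
  assumes a: "a \<in> Omega L" "a \<notin> B_set L"
  shows "exp_hit L q a (B_set L) * capacity L q {a} (B_set L)
    = (\<Sum>\<sigma>\<in>Omega L. if \<sigma> \<in> B_set L then 0 else pi_east L q \<sigma> * equilibrium_potential L q a (B_set L) \<sigma>)"
proof -
  let ?h = "equilibrium_potential L q a (B_set L)" and ?w = "\<lambda>\<tau>. exp_hit L q \<tau> (B_set L)"
  have "(\<Sum>\<sigma>\<in>Omega L. pi_east L q \<sigma> * ?h \<sigma> * generator L q ?w \<sigma>)
      = - (\<Sum>\<sigma>\<in>Omega L. if \<sigma> \<in> B_set L then 0 else pi_east L q \<sigma> * ?h \<sigma>)"
    by (subst sum_negf[symmetric], intro sum.cong refl)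
       (auto simp: generator_exp_hit equilibrium_potential_def a)
  moreover have "pi_east L q \<sigma> * ?w \<sigma> * generator L q ?h \<sigma>
      = (if \<sigma> = a then - pi_east L q a * ?w a * R L q a * escape_prob L q a {a} (B_set L) else 0)"
    if "\<sigma> \<in> Omega L" for \<sigma>
    using that by (cases "\<sigma> \<in> B_set L") (auto simp: generator_equilibrium_potential exp_hit_in a)
  ultimately show ?thesis
    using generator_self_adjoint[of L q ?h ?w] a
    unfolding capacity_def by (simp add: finite_Omega mult_ac cong: sum.cong)
qed

lemma capacity_nonneg: "A \<subseteq> Omega L \<Longrightarrow> 0 \<le> capacity L q A B"
  unfolding capacity_def using q_pos q_le_1
  by (intro sum_nonneg mult_nonneg_nonneg pi_east_nonneg R_nonneg escape_prob_nonneg) auto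

lemma T_hit_mult_capacity_bounds:
  "pi_east L q (one_zero L) \<le> T_hit L q * capacity L q {one_zero L} (B_set L)"
  "T_hit L q * capacity L q {one_zero L} (B_set L) \<le> q"
proof -
  let ?h = "equilibrium_potential L q (one_zero L) (B_set L)"
  have TC: "T_hit L q * capacity L q {one_zero L} (B_set L)
      = (\<Sum>\<sigma>\<in>Omega L. if \<sigma> \<in> B_set L then 0 else pi_east L q \<sigma> * ?h \<sigma>)"
    unfolding T_hit_def by (rule exp_hit_mult_capacity[OF one_zero_in_Omega one_zero_notin_B_set])
  have \<pi>: "0 \<le> pi_east L q \<sigma>" for \<sigma>
    using q_pos q_le_1 by (simp add: pi_east_nonneg)
  have "pi_east L q (one_zero L)
      = (if one_zero L \<in> B_set L then 0 else pi_east L q (one_zero L) * ?h (one_zero L))"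
    using one_zero_notin_B_set by (simp add: equilibrium_potential_def)
  also have "\<dots> \<le> (\<Sum>\<sigma>\<in>Omega L. if \<sigma> \<in> B_set L then 0 else pi_east L q \<sigma> * ?h \<sigma>)"
    using equilibrium_potential_bounds \<pi>
    by (intro member_le_sum[OF one_zero_in_Omega]) (auto simp: finite_Omega)
  finally show "pi_east L q (one_zero L) \<le> T_hit L q * capacity L q {one_zero L} (B_set L)"
    using TC by simp
  have "(\<Sum>\<sigma>\<in>Omega L. if \<sigma> \<in> B_set L then 0 else pi_east L q \<sigma> * ?h \<sigma>)
      \<le> (\<Sum>\<sigma>\<in>Omega L. if \<sigma> L then 0 else pi_east L q \<sigma>)"
    using equilibrium_potential_bounds \<pi> by (intro sum_mono) (auto simp: in_B_set_iff mult_left_le)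
  also have "\<dots> = q" using sum_pi_east_last_zero L_pos .
  finally show "T_hit L q * capacity L q {one_zero L} (B_set L) \<le> q"
    using TC by simp
qed

end

lemma exp_neg_2_le_one_minus_power:
  fixes q :: real
  assumes "0 < q" "q \<le> 1/2" "n * q \<le> 1"
  shows "exp (-2) \<le> (1 - q) ^ n"
proof -
  have "2 * q\<^sup>2 \<le> q"
    using assms(1,2) mult_right_mono[of "2 * q" 1 q] by (simp add: power2_eq_square)
  then have "-2 * q \<le> ln (1 - q)"
    using ln_one_minus_pos_lower_bound[of q] assms(1,2) by linarith
  then have "n * (-2 * q) \<le> n * ln (1 - q)"
    by (rule mult_left_mono) simp
  also have "\<dots> = ln ((1 - q) ^ n)"
    using assms(2) by (simp add: ln_realpow)
  finally have "n * (-2 * q) \<le> ln ((1 - q) ^ n)" .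
  then have "exp (-2) \<le> exp (ln ((1 - q) ^ n))"
    using assms(3) by simp
  then show ?thesis using assms(2) by simp
qed

lemma pi_east_one_zero_lower_bound:
  assumes "0 < q" "q \<le> 1/2" "0 < L" "L * q \<le> 1"
  shows "exp (-2) * q \<le> pi_east L q (one_zero L)"
proof -
  have "real (L - 1) * q \<le> 1"
    using assms by (simp add: Suc_leI algebra_simps)
  then have "exp (-2) \<le> (1 - q) ^ (L - 1)"
    using assms by (intro exp_neg_2_le_one_minus_power) auto
  then show ?thesis
    using assms by (simp add: pi_east_one_zero mult_right_mono)
qed

lemma floor_inverse_powr_bounds:
  fixes q \<gamma> :: real
  assumes "0 < q" "q < 1" "0 < \<gamma>" "\<gamma> \<le> 1"
  shows "0 < nat \<lfloor>1 / q powr \<gamma>\<rfloor>" "nat \<lfloor>1 / q powr \<gamma>\<rfloor> * q \<le> 1"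
proof -
  have "q \<le> q powr \<gamma>" "q powr \<gamma> < 1"
    using assms powr_mono'[of \<gamma> 1 q] powr_less_mono2[of \<gamma> q 1] by auto
  then have "1 < 1 / q powr \<gamma>" "1 / q powr \<gamma> \<le> 1 / q"
    using assms(1) by (auto simp: frac_le)
  then show "0 < nat \<lfloor>1 / q powr \<gamma>\<rfloor>" by linarith
  have "real (nat \<lfloor>1 / q powr \<gamma>\<rfloor>) \<le> 1 / q"
    using \<open>1 < 1 / q powr \<gamma>\<close> \<open>1 / q powr \<gamma> \<le> 1 / q\<close> by linarith
  then show "nat \<lfloor>1 / q powr \<gamma>\<rfloor> * q \<le> 1"
    using assms(1) by (simp add: pos_le_divide_eq)
qed

theorem mainTheorem16:
  shows "\<exists>c>0. \<forall>(q::real) (\<gamma>::real) (L::nat).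
           0 < q \<longrightarrow> q < 1/2 \<longrightarrow> 0 < \<gamma> \<longrightarrow> \<gamma> \<le> 1 \<longrightarrow>
           L = nat \<lfloor>1 / q powr \<gamma>\<rfloor> \<longrightarrow>
           c * q / capacity L q {one_zero L} (B_set L) \<le> T_hit L q \<and>
           T_hit L q \<le> q / capacity L q {one_zero L} (B_set L)"
proof (intro exI[of _ "exp (-2)"] conjI allI impI)
  fix q \<gamma> :: real and L :: nat
  assume q: "0 < q" "q < 1/2" and \<gamma>: "0 < \<gamma>" "\<gamma> \<le> 1" and L: "L = nat \<lfloor>1 / q powr \<gamma>\<rfloor>"
  have L_pos: "0 < L" and Lq: "L * q \<le> 1"
    using floor_inverse_powr_bounds[of q \<gamma>] q \<gamma> L by auto
  interpret east_process L q using q L_pos by unfold_locales auto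
  let ?C = "capacity L q {one_zero L} (B_set L)"
  have "exp (-2) * q \<le> pi_east L q (one_zero L)"
    using pi_east_one_zero_lower_bound q L_pos Lq by simp
  also have "\<dots> \<le> T_hit L q * ?C" by (rule T_hit_mult_capacity_bounds(1))
  finally have lower: "exp (-2) * q \<le> T_hit L q * ?C" .
  have upper: "T_hit L q * ?C \<le> q" by (rule T_hit_mult_capacity_bounds(2))
  have "0 < exp (-2) * q" using q by simp
  then have "0 < T_hit L q * ?C" using lower by linarith
  moreover have "0 \<le> ?C" by (rule capacity_nonneg) (simp add: one_zero_in_Omega)
  ultimately have C_pos: "0 < ?C" by (auto simp: zero_less_mult_iff)
  show "exp (-2) * q / ?C \<le> T_hit L q" using lower C_pos by (simp add: pos_divide_le_eq)
  show "T_hit L q \<le> q / ?C" using upper C_pos by (simp add: pos_le_divide_eq)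
qed (simp)

end
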